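(* Let $p$ be an odd prime, $a_1,a_2,a_3\in\mathbb{F}_p$, $s=3+a_1+a_2+a_3$, and fix an index $i$ (indices modulo $3$). Let $x\neq(0,0,0)$ be a solution in $\mathbb{F}_p^3$ of \[ x_1^2+x_2^2+x_3^2+a_1x_2x_3+a_2x_1x_3+a_3x_1x_2 = s\,x_1x_2x_3 \] with $x_i=0$. Let $m_k$ ($k=1,2,3$) replace $x_k$ by $-x_k + s x_{k-1}x_{k+1} - a_{k+1}x_{k-1} - a_{k-1}x_{k+1}$ leaving the other coordinates unchanged, let $\rho = m_{i+1}\circ m_{i-1}$, and let $N$ be the order of $\rho$ as a permutation of the nonzero solutions with $i$-th coordinate $0$. For such solutions $y$ (which have $y_{i-1}y_{i+1}\neq 0$) define \[ \Delta_i(y) = \frac12\Big(\frac{a_{i-1}}{y_{i-1}} + \frac{a_{i+1}}{y_{i+1}}\Big). \] If $a_i^2\neq 4$, then \[ \sum_{\ell=0}^{N-1}\Big(\Delta_i(m_{i-1}\rho^\ell x) + \Delta_i(\rho^\ell x)\Big) = 0. \] If $a_i^2 = 4$, then this identity holds if and only if $2a_{i-1} = a_{i+1}a_i$. *)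

theory Defs
  imports Main "HOL-Library.Numeral_Type" "HOL-Computational_Algebra.Primes"
begin

text \<open>Points of F_p^3 are functions from the index type 3 (integers mod 3)
  to the field; index 0 of type 3 plays the role of the paper's index 3.\<close>

definition sval :: "(3 \<Rightarrow> 'a::field) \<Rightarrow> 'a" where
  "sval a = 3 + a 1 + a 2 + a 0"

definition is_sol :: "(3 \<Rightarrow> 'a::field) \<Rightarrow> (3 \<Rightarrow> 'a) \<Rightarrow> bool" where
  "is_sol a x \<longleftrightarrow>
     x 1 ^ 2 + x 2 ^ 2 + x 0 ^ 2 + a 1 * x 2 * x 0 + a 2 * x 1 * x 0 + a 0 * x 1 * x 2
     = sval a * x 1 * x 2 * x 0"

definition mv :: "(3 \<Rightarrow> 'a::field) \<Rightarrow> 3 \<Rightarrow> (3 \<Rightarrow> 'a) \<Rightarrow> (3 \<Rightarrow> 'a)" where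
  "mv a k x = x(k := - x k + sval a * x (k - 1) * x (k + 1)
                     - a (k + 1) * x (k - 1) - a (k - 1) * x (k + 1))"

definition rho :: "(3 \<Rightarrow> 'a::field) \<Rightarrow> 3 \<Rightarrow> (3 \<Rightarrow> 'a) \<Rightarrow> (3 \<Rightarrow> 'a)" where
  "rho a i = mv a (i + 1) \<circ> mv a (i - 1)"

definition solset :: "(3 \<Rightarrow> 'a::field) \<Rightarrow> 3 \<Rightarrow> (3 \<Rightarrow> 'a) set" where
  "solset a i = {y. is_sol a y \<and> y \<noteq> (\<lambda>_. 0) \<and> y i = 0}"

definition rho_order :: "(3 \<Rightarrow> 'a::field) \<Rightarrow> 3 \<Rightarrow> nat" where
  "rho_order a i = (LEAST n. n > 0 \<and> (\<forall>y \<in> solset a i. (rho a i ^^ n) y = y))"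

definition Delta :: "(3 \<Rightarrow> 'a::field) \<Rightarrow> 3 \<Rightarrow> (3 \<Rightarrow> 'a) \<Rightarrow> 'a" where
  "Delta a i y = (a (i - 1) / y (i - 1) + a (i + 1) / y (i + 1)) / 2"

end

theory Submission
  imports Defs "HOL-Number_Theory.Residues" "HOL-Combinatorics.Cycles"
begin

text \<open>On the plane x_i = 0 write u = x_(i-1), v = x_(i+1) and c = a_i. There the equation
  is the binary quadratic form u^2 + c u v + v^2 = 0 and both moves are linear,
  u \<mapsto> -u - c v and v \<mapsto> -v - c u. Hence every solution y on the plane is an eigenvector
  of rho, with eigenvalue \<lambda> = -(u + c v) / u, and \<lambda> = 1 iff 2u + cv = 0; since
  (2u + cv)^2 = 4(u^2 + cuv + v^2) + (c^2 - 4) v^2, this happens iff c^2 = 4.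
  As Delta is homogeneous of degree -1, the sum is (Delta (m_(i-1) x) + Delta x) times the full
  geometric series of \<lambda>^-1 over a period N of rho, which vanishes when \<lambda> \<noteq> 1.
  When c^2 = 4, rho fixes the plane pointwise, so N = 1, m_(i-1) fixes x and the sum is
  2 Delta x, which vanishes iff 2 a_(i-1) = a_(i+1) a_i because 2u = -cv.\<close>

lemma two_neq_zero_if_odd_card:
  assumes "odd CARD('a::{ring_1,finite})"
  shows "(2::'a) \<noteq> 0"
proof
  assume "(2::'a) = 0"
  then have "of_nat 2 = (0::'a)" by simp
  then have "CHAR('a) dvd 2"
    by (simp only: of_nat_eq_0_iff_char_dvd)
  then have "CHAR('a) = 2"
    using two_is_prime_nat CHAR_not_1 by (auto simp: prime_nat_iff)
  then show False
    using CHAR_dvd_CARD[where ?'a = 'a] assms by simp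
qed

lemma exhaust_3:
  fixes k :: 3
  shows "k = 0 \<or> k = 1 \<or> k = 2"
proof (induct k)
  case (of_int z)
  then have "z = 0 \<or> z = 1 \<or> z = 2" by fastforce
  then show ?case by auto
qed

lemma index_3_simps:
  fixes i :: 3
  shows "i - 1 - 1 = i + 1" "i + 1 + 1 = i - 1" "i - 1 + 1 = i" "i + 1 - 1 = i"
    and "i - 1 \<noteq> i" "i + 1 \<noteq> i" "i - 1 \<noteq> i + 1"
  using exhaust_3[of i] by auto

lemma index_3_cases:
  fixes i t :: 3
  shows "t = i \<or> t = i - 1 \<or> t = i + 1"
  using exhaust_3[of i] exhaust_3[of t] by auto

lemma is_sol_on_plane:
  assumes "y i = 0"
  shows "is_sol a y \<longleftrightarrow> y (i - 1)^2 + a i * y (i - 1) * y (i + 1) + y (i + 1)^2 = 0"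
proof -
  have index_3_numerals: "(-1::3) = 2" "(3::3) = 0" by simp_all
  show ?thesis
    using exhaust_3[of i] assms by (auto simp: is_sol_def algebra_simps index_3_numerals)
qed

lemma mv_mv [simp]: "mv a k (mv a k y) = y"
  using index_3_simps[of k] by (auto simp: mv_def)

lemma bij_mv: "bij (mv a k)"
  by (rule o_bij[of "mv a k"]) (simp_all add: fun_eq_iff)

lemma permutation_rho:
  fixes a :: "3 \<Rightarrow> 'a::{field,finite}"
  shows "permutation (rho a i)"
  by (simp add: permutation rho_def bij_comp bij_mv)

lemma mv_prev_on_plane:
  assumes "y i = 0"
  shows "mv a (i - 1) y = y(i - 1 := - y (i - 1) - a i * y (i + 1))"
  using assms by (simp add: mv_def index_3_simps)

lemma mv_next_on_plane:
  assumes "y i = 0"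
  shows "mv a (i + 1) y = y(i + 1 := - y (i + 1) - a i * y (i - 1))"
  using assms by (simp add: mv_def index_3_simps)

lemma rho_on_plane:
  assumes "y i = 0"
  shows "rho a i y = y(i - 1 := - y (i - 1) - a i * y (i + 1),
                       i + 1 := - y (i + 1) - a i * (- y (i - 1) - a i * y (i + 1)))"
  using assms index_3_simps[of i] by (simp add: rho_def mv_prev_on_plane mv_next_on_plane)

lemma rho_scale:
  assumes "y i = 0"
  shows "rho a i (\<lambda>t. m * y t) = (\<lambda>t. m * rho a i y t)"
  using assms index_3_simps[of i] by (simp add: rho_on_plane fun_eq_iff algebra_simps)

lemma mv_prev_scale:
  assumes "y i = 0"
  shows "mv a (i - 1) (\<lambda>t. m * y t) = (\<lambda>t. m * mv a (i - 1) y t)"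
  using assms index_3_simps[of i] by (simp add: mv_prev_on_plane fun_eq_iff algebra_simps)

lemma Delta_scale: "Delta a i (\<lambda>t. m * y t) = Delta a i y / m"
  by (simp add: Delta_def divide_divide_eq_left add_divide_distrib mult_ac)

lemma solsetD:
  assumes "y \<in> solset a i"
  shows "y i = 0" and "y (i - 1)^2 + a i * y (i - 1) * y (i + 1) + y (i + 1)^2 = 0"
proof -
  show "y i = 0"
    using assms by (simp add: solset_def)
  then show "y (i - 1)^2 + a i * y (i - 1) * y (i + 1) + y (i + 1)^2 = 0"
    using assms is_sol_on_plane[of y i a] by (simp add: solset_def)
qed

lemma solset_coords_nonzero:
  assumes "y \<in> solset a i"
  shows "y (i - 1) \<noteq> 0" "y (i + 1) \<noteq> 0"
proof -
  have "y (i - 1) \<noteq> 0 \<or> y (i + 1) \<noteq> 0"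
    using assms index_3_cases[of _ i] by (fastforce simp: solset_def)
  then show "y (i - 1) \<noteq> 0" "y (i + 1) \<noteq> 0"
    using solsetD(2)[OF assms] by auto
qed

definition rho_eigenvalue :: "(3 \<Rightarrow> 'a::field) \<Rightarrow> 3 \<Rightarrow> (3 \<Rightarrow> 'a) \<Rightarrow> 'a" where
  "rho_eigenvalue a i y = - (y (i - 1) + a i * y (i + 1)) / y (i - 1)"

lemma rho_eigenvalue_mult_prev:
  assumes "y \<in> solset a i"
  shows "rho_eigenvalue a i y * y (i - 1) = - y (i - 1) - a i * y (i + 1)"
  using solset_coords_nonzero(1)[OF assms] by (simp add: rho_eigenvalue_def field_simps)

lemma rho_solset_eq_scale:
  assumes "y \<in> solset a i"
  shows "rho a i y = (\<lambda>t. rho_eigenvalue a i y * y t)"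
proof -
  define u v c where "u = y (i - 1)" and "v = y (i + 1)" and "c = a i"
  have form: "u^2 + c * u * v + v^2 = 0"
    using solsetD(2)[OF assms] by (simp add: u_def v_def c_def)
  have u0: "u \<noteq> 0"
    using solset_coords_nonzero[OF assms] by (simp add: u_def)
  have "u * (- v - c * (- u - c * v)) - (- (u + c * v) * v) = c * (u^2 + c * u * v + v^2)"
    by (simp add: algebra_simps power2_eq_square)
  then have "- (u + c * v) * v = u * (- v - c * (- u - c * v))"
    using form by simp
  then have "rho_eigenvalue a i y * v = u * (- v - c * (- u - c * v)) / u"
    by (simp add: rho_eigenvalue_def u_def v_def c_def)
  then have rho_next: "- v - c * (- u - c * v) = rho_eigenvalue a i y * v"
    using u0 by simp
  show ?thesis
  proof
    fix t
    show "rho a i y t = rho_eigenvalue a i y * y t"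
      using rho_next solsetD(1)[OF assms] rho_eigenvalue_mult_prev[OF assms]
        index_3_cases[of t i] index_3_simps[of i]
      by (auto simp: rho_on_plane u_def v_def c_def)
  qed
qed

lemma mv_prev_solset:
  assumes "y \<in> solset a i"
  shows "mv a (i - 1) y = y(i - 1 := rho_eigenvalue a i y * y (i - 1))"
  by (simp add: mv_prev_on_plane solsetD(1)[OF assms] rho_eigenvalue_mult_prev[OF assms])

lemma rho_funpow_solset:
  assumes "y \<in> solset a i"
  shows "(rho a i ^^ l) y = (\<lambda>t. rho_eigenvalue a i y ^ l * y t)"
proof (induction l)
  case 0
  then show ?case by simp
next
  case (Suc l)
  have "(rho a i ^^ Suc l) y = rho a i (\<lambda>t. rho_eigenvalue a i y ^ l * y t)"
    using Suc by simp
  also have "\<dots> = (\<lambda>t. rho_eigenvalue a i y ^ l * rho a i y t)"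
    using solsetD(1)[OF assms] by (rule rho_scale)
  finally show ?case
    by (simp add: rho_solset_eq_scale[OF assms] mult_ac)
qed

lemma funpow_rho_order_solset:
  fixes a y :: "3 \<Rightarrow> 'a::{field,finite}"
  assumes "y \<in> solset a i"
  shows "(rho a i ^^ rho_order a i) y = y"
proof -
  obtain n where "rho a i ^^ n = id" "n > 0"
    using permutation_is_nilpotent[OF permutation_rho] .
  then have "0 < n \<and> (\<forall>y \<in> solset a i. (rho a i ^^ n) y = y)"
    by simp
  then have "0 < rho_order a i \<and> (\<forall>y \<in> solset a i. (rho a i ^^ rho_order a i) y = y)"
    unfolding rho_order_def by (rule LeastI)
  then show ?thesis
    using assms by blast
qed

lemma rho_eigenvalue_power_order:
  fixes a y :: "3 \<Rightarrow> 'a::{field,finite}"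
  assumes "y \<in> solset a i"
  shows "rho_eigenvalue a i y ^ rho_order a i = 1"
proof -
  have "rho_eigenvalue a i y ^ rho_order a i * y (i - 1) = y (i - 1)"
    using funpow_rho_order_solset[OF assms] unfolding rho_funpow_solset[OF assms] by (rule fun_cong)
  then show ?thesis
    using solset_coords_nonzero(1)[OF assms] by simp
qed

lemma rho_eigenvalue_eq_1_iff_coords:
  assumes "y \<in> solset a i"
  shows "rho_eigenvalue a i y = 1 \<longleftrightarrow> 2 * y (i - 1) + a i * y (i + 1) = 0"
  using solset_coords_nonzero(1)[OF assms]
  by (auto simp: rho_eigenvalue_def field_simps)

lemma rho_eigenvalue_eq_1_iff:
  assumes "y \<in> solset a i"
  shows "rho_eigenvalue a i y = 1 \<longleftrightarrow> a i ^ 2 = 4"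
proof -
  define u v c where "u = y (i - 1)" and "v = y (i + 1)" and "c = a i"
  have form: "u^2 + c * u * v + v^2 = 0"
    using solsetD(2)[OF assms] by (simp add: u_def v_def c_def)
  have v0: "v \<noteq> 0" using solset_coords_nonzero[OF assms] by (simp add: u_def v_def c_def)
  have "(2 * u + c * v)^2 = 4 * (u^2 + c * u * v + v^2) + (c^2 - 4) * v^2"
    by (simp add: algebra_simps power2_eq_square)
  then have "(2 * u + c * v)^2 = (c^2 - 4) * v^2"
    using form by simp
  then have "2 * u + c * v = 0 \<longleftrightarrow> c^2 = 4"
    using v0 by auto
  then show ?thesis
    using rho_eigenvalue_eq_1_iff_coords[OF assms] by (simp add: u_def v_def c_def)
qed

lemma rho_order_eq_1:
  assumes "a i ^ 2 = 4"
  shows "rho_order a i = 1"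
proof -
  have "rho a i y = y" if "y \<in> solset a i" for y
    using rho_solset_eq_scale[OF that] rho_eigenvalue_eq_1_iff[OF that] assms by simp
  then show ?thesis
    unfolding rho_order_def by (intro Least_equality) auto
qed

lemma Delta_eq_0_iff_if_degenerate:
  fixes a y :: "3 \<Rightarrow> 'a::field"
  assumes "(2::'a) \<noteq> 0" and "y \<in> solset a i" and "a i ^ 2 = 4"
  shows "Delta a i y = 0 \<longleftrightarrow> 2 * a (i - 1) = a (i + 1) * a i"
proof -
  define u v where "u = y (i - 1)" and "v = y (i + 1)"
  have u0: "u \<noteq> 0" and v0: "v \<noteq> 0"
    using solset_coords_nonzero[OF assms(2)] by (simp_all add: u_def v_def)
  have double_prev: "2 * u = - (a i * v)"
    using rho_eigenvalue_eq_1_iff_coords[OF assms(2)] rho_eigenvalue_eq_1_iff[OF assms(2)] assms(3)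
    by (simp add: u_def v_def eq_neg_iff_add_eq_0)
  have "2 * 2 * u * v * Delta a i y = 2 * a (i - 1) * v + a (i + 1) * (2 * u)"
    using u0 v0 assms(1) by (simp add: Delta_def u_def v_def field_simps)
  also have "\<dots> = (2 * a (i - 1) - a (i + 1) * a i) * v"
    by (simp only: double_prev) (simp add: algebra_simps)
  finally have "2 * 2 * u * v * Delta a i y = (2 * a (i - 1) - a (i + 1) * a i) * v" .
  moreover have "(2::'a) * 2 \<noteq> 0"
    using assms(1) by (simp only: mult_eq_0_iff) simp
  ultimately show ?thesis
    using u0 v0 by (metis mult_eq_0_iff right_minus_eq)
qed

definition Delta_orbit_sum :: "(3 \<Rightarrow> 'a::field) \<Rightarrow> 3 \<Rightarrow> (3 \<Rightarrow> 'a) \<Rightarrow> 'a" where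
  "Delta_orbit_sum a i y =
     (\<Sum>l<rho_order a i. Delta a i (mv a (i - 1) ((rho a i ^^ l) y)) + Delta a i ((rho a i ^^ l) y))"

lemma Delta_orbit_sum_geometric:
  assumes "y \<in> solset a i"
  shows "Delta_orbit_sum a i y = (Delta a i (mv a (i - 1) y) + Delta a i y)
           * (\<Sum>l<rho_order a i. inverse (rho_eigenvalue a i y) ^ l)"
proof -
  have "Delta a i (mv a (i - 1) ((rho a i ^^ l) y)) + Delta a i ((rho a i ^^ l) y)
        = (Delta a i (mv a (i - 1) y) + Delta a i y) * inverse (rho_eigenvalue a i y) ^ l" for l
    by (simp only: rho_funpow_solset[OF assms] mv_prev_scale[of y i, OF solsetD(1)[OF assms]]
        Delta_scale) (simp add: divide_inverse power_inverse algebra_simps)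
  then show ?thesis
    by (simp add: Delta_orbit_sum_def sum_distrib_left)
qed

lemma Delta_orbit_sum_eq_0_if_nondegenerate:
  fixes a y :: "3 \<Rightarrow> 'a::{field,finite}"
  assumes "y \<in> solset a i" and "a i ^ 2 \<noteq> 4"
  shows "Delta_orbit_sum a i y = 0"
proof -
  let ?q = "inverse (rho_eigenvalue a i y)"
  have "?q \<noteq> 1"
    using rho_eigenvalue_eq_1_iff[OF assms(1)] assms(2) by simp
  moreover have "?q ^ rho_order a i = 1"
    using rho_eigenvalue_power_order[OF assms(1)] by (simp add: power_inverse)
  ultimately have "(\<Sum>l<rho_order a i. ?q ^ l) = 0"
    by (simp add: sum_gp_strict)
  then show ?thesis
    by (simp add: Delta_orbit_sum_geometric[OF assms(1)])
qed

lemma Delta_orbit_sum_eq_0_iff_if_degenerate: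
  fixes a y :: "3 \<Rightarrow> 'a::field"
  assumes "(2::'a) \<noteq> 0" and "y \<in> solset a i" and "a i ^ 2 = 4"
  shows "Delta_orbit_sum a i y = 0 \<longleftrightarrow> 2 * a (i - 1) = a (i + 1) * a i"
proof -
  have "rho_eigenvalue a i y = 1"
    using rho_eigenvalue_eq_1_iff[OF assms(2)] assms(3) by simp
  then have "mv a (i - 1) y = y"
    using mv_prev_solset[OF assms(2)] by simp
  then have "Delta_orbit_sum a i y = 2 * Delta a i y"
    using rho_order_eq_1[of a i, OF assms(3)] by (simp add: Delta_orbit_sum_def)
  then show ?thesis
    using Delta_eq_0_iff_if_degenerate[OF assms] assms(1) by simp
qed

theorem proposition2p3:
  fixes p :: nat and a x :: "3 \<Rightarrow> 'a::{field,finite}" and i :: 3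
  assumes "prime p" and "odd p" and "CARD('a) = p"
    and "is_sol a x" and "x \<noteq> (\<lambda>_. 0)" and "x i = 0"
  shows "(a i ^ 2 \<noteq> 4 \<longrightarrow>
            (\<Sum>l<rho_order a i. Delta a i (mv a (i - 1) ((rho a i ^^ l) x))
                                + Delta a i ((rho a i ^^ l) x)) = 0)
       \<and> (a i ^ 2 = 4 \<longrightarrow>
            ((\<Sum>l<rho_order a i. Delta a i (mv a (i - 1) ((rho a i ^^ l) x))
                                + Delta a i ((rho a i ^^ l) x)) = 0
             \<longleftrightarrow> 2 * a (i - 1) = a (i + 1) * a i))"
proof -
  have x: "x \<in> solset a i"
    using assms(4-6) by (simp add: solset_def)
  have "(2::'a) \<noteq> 0"
    using two_neq_zero_if_odd_card assms(2,3) by blast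
  then show ?thesis
    unfolding Delta_orbit_sum_def[symmetric]
    using Delta_orbit_sum_eq_0_if_nondegenerate[OF x] Delta_orbit_sum_eq_0_iff_if_degenerate[OF _ x]
    by blast
qed

end
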